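(* Let $G$ be a connected closed subgroup of $\mathrm{SO}(k)$ acting transitively on the unit sphere $S^{k-1}\subset\mathbb{R}^k$, with Lie algebra $\mathfrak{g}$. Then every $A\in\mathrm{GL}_k(\mathbb{R})$ normalizing $\mathfrak{g}$ (i.e. $A\mathfrak{g}A^{-1}=\mathfrak{g}$) belongs to the conformal group $\mathrm{CO}(k)=\mathbb{R}^*\,\mathrm{SO}(k)$. *)

theory Defs
  imports "HOL-Analysis.Analysis"
begin

text \<open>Matrix powers w.r.t. the matrix product (not the componentwise product).\<close>
primrec mat_power :: "real^'n^'n \<Rightarrow> nat \<Rightarrow> real^'n^'n" where
  "mat_power X 0 = mat 1"
| "mat_power X (Suc m) = X ** mat_power X m"

definition mat_exp :: "real^'n^'n \<Rightarrow> real^'n^'n" where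
  "mat_exp X = (\<Sum>m. (1 / fact m) *\<^sub>R mat_power X m)"

definition SO :: "(real^'n^'n) set" where
  "SO = {A. orthogonal_matrix A \<and> det A = 1}"

definition matrix_subgroup :: "(real^'n^'n) set \<Rightarrow> bool" where
  "matrix_subgroup G \<longleftrightarrow> mat 1 \<in> G \<and> (\<forall>A\<in>G. \<forall>B\<in>G. A ** B \<in> G)
     \<and> (\<forall>A\<in>G. invertible A \<and> matrix_inv A \<in> G)"

definition lie_algebra :: "(real^'n^'n) set \<Rightarrow> (real^'n^'n) set" where
  "lie_algebra G = {X. \<forall>t::real. mat_exp (t *\<^sub>R X) \<in> G}"

definition transitive_on_sphere :: "(real^'n^'n) set \<Rightarrow> bool" where
  "transitive_on_sphere G \<longleftrightarrow>
     (\<forall>x y :: real^'n. norm x = 1 \<longrightarrow> norm y = 1 \<longrightarrow> (\<exists>g\<in>G. g *v x = y))"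

definition CO :: "(real^'n^'n) set" where
  "CO = {A. \<exists>c B. c \<noteq> 0 \<and> orthogonal_matrix B \<and> A = c *\<^sub>R B}"

end

theory Submission
  imports Defs
begin

(*
  Every X in the Lie algebra g of a group of orthogonal matrices is skew: v . X v = 0.  The heart
  of the proof is that, for a closed subgroup G of O(k) transitive on the sphere and a unit vector
  x, the vectors X x with X in g span the whole tangent space x^perp.  Otherwise take a unit
  u in x^perp orthogonal to all X x, and elements k_n of G moving x to points y_n -> x on the
  great circle towards u, each chosen nearest to the identity in its coset of the stabilizer H of
  x.  A limit Z of the normalized secants (k_n - 1)/|k_n - 1| lies in g because G is closed, and
  Z x = 0 because u is orthogonal to Z x while the y_n approach x from the side of u.  Hence
  exp(t Z) lies in H, and minimality of k_n gives <k_n - 1, Z> <= 0, so <Z, Z> <= 0 in the limit,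
  which is absurd.

  If A normalizes g, then A X A^-1 is skew for X in g, i.e. A z is orthogonal to A X z.  By the
  spanning property A x is orthogonal to A v whenever x is orthogonal to v, and a linear map
  preserving orthogonality is a nonzero multiple of an orthogonal map.
*)

section \<open>The exponential series in Banach algebras\<close>

lemma exp_scaleR_of_nat:
  fixes x :: "'a::{real_normed_algebra_1,banach}"
  shows "exp (of_nat n *\<^sub>R x) = exp x ^ n"
proof (induction n)
  case (Suc n)
  have "exp (of_nat (Suc n) *\<^sub>R x) = exp (x + of_nat n *\<^sub>R x)"
    by (simp add: algebra_simps)
  also have "\<dots> = exp x * exp (of_nat n *\<^sub>R x)"
    by (rule exp_add_commuting) simp
  finally show ?case
    using Suc by simp
qed simp

lemma norm_exp_minus_one_minus_le:
  fixes z :: "'a::{real_normed_algebra_1,banach}"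
  assumes "norm z \<le> 1"
  shows "norm (exp z - 1 - z) \<le> norm z ^ 2"
proof -
  let ?f = "\<lambda>n. inverse (fact (n + 2)) *\<^sub>R z ^ (n + 2)"
  let ?g = "\<lambda>n. inverse (fact (n + 2)) * norm z ^ (n + 2)"
  have g: "summable ?g"
    using summable_ignore_initial_segment[OF summable_exp[of "norm z"], of 2] by simp
  have fg: "norm (?f n) \<le> ?g n" for n
    by (simp add: norm_power_ineq mult_left_mono del: power_Suc)
  have f: "summable (\<lambda>n. norm (?f n))"
    by (rule summable_comparison_test[OF _ g]) (use fg in auto)
  have "norm (exp z - 1 - z) = norm (suminf ?f)"
    by (simp add: exp_first_two_terms[of z])
  also have "\<dots> \<le> suminf ?g"
    by (rule order_trans[OF summable_norm[OF f] suminf_le[OF fg f g]])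
  also have "\<dots> = exp (norm z) - 1 - norm z"
    using exp_first_two_terms[of "norm z"] by simp
  also have "\<dots> \<le> norm z ^ 2"
    using exp_bound[of "norm z"] assms by simp
  finally show ?thesis .
qed

lemma norm_power_diff_le:
  fixes a b :: "'a::real_normed_algebra_1"
  assumes a: "norm a \<le> K" and b: "norm b \<le> K" and K: "1 \<le> K"
  shows "norm (a ^ m - b ^ m) \<le> real m * K ^ m * norm (a - b)"
proof (induction m)
  case (Suc m)
  have b_m: "norm (b ^ m) \<le> K ^ m"
    by (rule order_trans[OF norm_power_ineq power_mono[OF b norm_ge_zero]])
  have "a ^ Suc m - b ^ Suc m = a * (a ^ m - b ^ m) + (a - b) * b ^ m"
    by (simp add: algebra_simps)
  then have "norm (a ^ Suc m - b ^ Suc m) \<le> norm a * norm (a ^ m - b ^ m) + norm (a - b) * norm (b ^ m)"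
    by (metis norm_triangle_le add_mono norm_mult_ineq)
  also have "\<dots> \<le> K * (real m * K ^ m * norm (a - b)) + norm (a - b) * K ^ m"
    using Suc a b_m K by (intro add_mono mult_mono mult_left_mono) auto
  also have "\<dots> \<le> K * (real m * K ^ m * norm (a - b)) + norm (a - b) * K ^ Suc m"
    using K by (intro add_left_mono mult_left_mono power_increasing) auto
  finally show ?case
    by (simp add: algebra_simps)
qed simp

lemma norm_power_one_plus_scaleR_diff_power_exp_le:
  fixes w z :: "'a::{real_normed_algebra_1,banach}"
  assumes e: "0 < e" and small: "e * norm z \<le> 1"
  shows "norm ((1 + e *\<^sub>R w) ^ m - exp (e *\<^sub>R z) ^ m)
    \<le> real m * e * exp (real m * e * (norm w + norm z)) * (norm (w - z) + e * norm z ^ 2)"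
proof -
  define K where "K = exp (e * (norm w + norm z))"
  have K1: "1 \<le> K"
    using e by (simp add: K_def)
  have "norm (1 + e *\<^sub>R w) \<le> 1 + e * norm w"
    using norm_triangle_ineq[of 1 "e *\<^sub>R w"] e by simp
  also have "\<dots> \<le> 1 + e * (norm w + norm z)"
    using e by (simp add: algebra_simps)
  also have "\<dots> \<le> K"
    unfolding K_def by (rule exp_ge_add_one_self)
  finally have a: "norm (1 + e *\<^sub>R w) \<le> K" .
  have "norm (exp (e *\<^sub>R z)) \<le> exp (e * norm z)"
    using norm_exp[of "e *\<^sub>R z"] e by simp
  also have "\<dots> \<le> K"
    using e by (simp add: K_def mult_left_mono)
  finally have b: "norm (exp (e *\<^sub>R z)) \<le> K" .
  have "1 + e *\<^sub>R w - exp (e *\<^sub>R z) = e *\<^sub>R (w - z) - (exp (e *\<^sub>R z) - 1 - e *\<^sub>R z)"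
    by (simp add: algebra_simps)
  then have "norm (1 + e *\<^sub>R w - exp (e *\<^sub>R z))
      \<le> norm (e *\<^sub>R (w - z)) + norm (exp (e *\<^sub>R z) - 1 - e *\<^sub>R z)"
    by (metis norm_triangle_ineq4)
  also have "\<dots> \<le> e * norm (w - z) + norm (e *\<^sub>R z) ^ 2"
    using e small by (intro add_mono norm_exp_minus_one_minus_le) simp_all
  also have "\<dots> = e * (norm (w - z) + e * norm z ^ 2)"
    using e by (simp add: algebra_simps power2_eq_square)
  finally have ab: "norm (1 + e *\<^sub>R w - exp (e *\<^sub>R z)) \<le> e * (norm (w - z) + e * norm z ^ 2)" .
  have "norm ((1 + e *\<^sub>R w) ^ m - exp (e *\<^sub>R z) ^ m)
      \<le> real m * K ^ m * norm (1 + e *\<^sub>R w - exp (e *\<^sub>R z))"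
    by (rule norm_power_diff_le[OF a b K1])
  also have "\<dots> \<le> real m * K ^ m * (e * (norm (w - z) + e * norm z ^ 2))"
    using K1 by (intro mult_left_mono ab) simp
  finally show ?thesis
    by (simp add: K_def exp_of_nat_mult[symmetric] algebra_simps)
qed

lemma tendsto_power_one_plus_scaleR:
  fixes W :: "nat \<Rightarrow> 'a::{real_normed_algebra_1,banach}"
  assumes e_pos: "\<And>n. 0 < e n" and e: "e \<longlonglongrightarrow> 0" and W: "W \<longlonglongrightarrow> Z"
    and m: "(\<lambda>n. real (m n) * e n) \<longlonglongrightarrow> t"
  shows "(\<lambda>n. (1 + e n *\<^sub>R W n) ^ m n) \<longlonglongrightarrow> exp (t *\<^sub>R Z)"
proof -
  define g where "g n = real (m n) * e n * exp (real (m n) * e n * (norm (W n) + norm Z))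
    * (norm (W n - Z) + e n * norm Z ^ 2)" for n
  have "isCont (\<lambda>s. exp (s *\<^sub>R Z)) t"
    by (rule has_vector_derivative_continuous[OF exp_scaleR_has_vector_derivative_right])
  then have "(\<lambda>n. exp ((real (m n) * e n) *\<^sub>R Z)) \<longlonglongrightarrow> exp (t *\<^sub>R Z)"
    by (rule isCont_tendsto_compose[OF _ m])
  then have lim_exp: "(\<lambda>n. exp (e n *\<^sub>R Z) ^ m n) \<longlonglongrightarrow> exp (t *\<^sub>R Z)"
    by (simp add: exp_scaleR_of_nat[symmetric])
  have "(\<lambda>n. e n * norm Z) \<longlonglongrightarrow> 0 * norm Z"
    by (intro tendsto_intros e)
  then have "eventually (\<lambda>n. e n * norm Z < 1) sequentially"
    by (rule order_tendstoD(2)) simp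
  then have "eventually (\<lambda>n. norm ((1 + e n *\<^sub>R W n) ^ m n - exp (e n *\<^sub>R Z) ^ m n) \<le> g n)
      sequentially"
    by (rule eventually_mono)
      (simp add: g_def norm_power_one_plus_scaleR_diff_power_exp_le e_pos less_imp_le)
  moreover have "g \<longlonglongrightarrow> t * exp (t * (norm Z + norm Z)) * (norm (Z - Z) + 0 * norm Z ^ 2)"
    unfolding g_def by (intro tendsto_intros m e W)
  then have "g \<longlonglongrightarrow> 0"
    by simp
  ultimately have "(\<lambda>n. (1 + e n *\<^sub>R W n) ^ m n - exp (e n *\<^sub>R Z) ^ m n) \<longlonglongrightarrow> 0"
    by (rule Lim_null_comparison)
  from tendsto_add[OF this lim_exp] show ?thesis
    by simp
qed

section \<open>Square matrices as a Banach algebra\<close>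

text \<open>
  With the operator norm, square matrices form a Banach algebra, so the library's \<open>exp\<close> is
  available; \<open>mat_exp\<close> is \<open>exp\<close> transported along \<open>Rep_sqmat\<close>.  The norm of
  \<open>real^'n^'n\<close> itself remains the Frobenius norm, which is used everywhere else.
\<close>

typedef (overloaded) 'n sqmat = "UNIV :: (real^'n^'n::finite) set"
  by simp

setup_lifting type_definition_sqmat

instantiation sqmat :: (finite) real_vector
begin
lift_definition zero_sqmat :: "'a sqmat" is 0 .
lift_definition plus_sqmat :: "'a sqmat \<Rightarrow> 'a sqmat \<Rightarrow> 'a sqmat" is "(+)" .
lift_definition minus_sqmat :: "'a sqmat \<Rightarrow> 'a sqmat \<Rightarrow> 'a sqmat" is "(-)" .
lift_definition uminus_sqmat :: "'a sqmat \<Rightarrow> 'a sqmat" is uminus .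
lift_definition scaleR_sqmat :: "real \<Rightarrow> 'a sqmat \<Rightarrow> 'a sqmat" is scaleR .
instance
  by standard (transfer; simp add: algebra_simps)+
end

instantiation sqmat :: (finite) real_algebra_1
begin
lift_definition one_sqmat :: "'a sqmat" is "mat 1" .
lift_definition times_sqmat :: "'a sqmat \<Rightarrow> 'a sqmat \<Rightarrow> 'a sqmat" is "(**)" .
instance
proof
  fix a b c :: "'a sqmat" and r :: real
  show "a * b * c = a * (b * c)"
    by transfer (simp add: matrix_mul_assoc)
  show "(a + b) * c = a * c + b * c"
    by transfer (simp add: matrix_matrix_mult_def vec_eq_iff sum.distrib algebra_simps)
  show "a * (b + c) = a * b + a * c"
    by transfer (simp add: matrix_add_ldistrib)
  show "1 * a = a" "a * 1 = a"
    by (transfer; simp)+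
  show "(0::'a sqmat) \<noteq> 1"
    by transfer (simp add: vec_eq_iff mat_def)
  show "r *\<^sub>R a * b = r *\<^sub>R (a * b)" "a * r *\<^sub>R b = r *\<^sub>R (a * b)"
    by (transfer; simp add: scalar_matrix_assoc matrix_scalar_ac)+
qed
end

instantiation sqmat :: (finite) real_normed_vector
begin
lift_definition norm_sqmat :: "'a sqmat \<Rightarrow> real" is "\<lambda>A. onorm ((*v) A)" .
definition dist_sqmat :: "'a sqmat \<Rightarrow> 'a sqmat \<Rightarrow> real"
  where "dist_sqmat a b = norm (a - b)"
definition sgn_sqmat :: "'a sqmat \<Rightarrow> 'a sqmat"
  where "sgn_sqmat a = inverse (norm a) *\<^sub>R a"
definition uniformity_sqmat :: "('a sqmat \<times> 'a sqmat) filter"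
  where "uniformity_sqmat = (INF e\<in>{0<..}. principal {(a, b). dist a b < e})"
definition open_sqmat :: "'a sqmat set \<Rightarrow> bool"
  where "open_sqmat S \<longleftrightarrow> (\<forall>a\<in>S. \<forall>\<^sub>F (a', b) in uniformity. a' = a \<longrightarrow> b \<in> S)"
instance
proof
  fix a b :: "'a sqmat" and r :: real
  show "norm a = 0 \<longleftrightarrow> a = 0"
    by transfer (simp add: onorm_eq_0 matrix_eq[where B = 0])
  show "norm (a + b) \<le> norm a + norm b"
  proof transfer
    fix A B :: "real^'a^'a"
    have "(*v) (A + B) = (\<lambda>x. A *v x + B *v x)"
      by (simp add: fun_eq_iff matrix_vector_mult_add_rdistrib)
    then show "onorm ((*v) (A + B)) \<le> onorm ((*v) A) + onorm ((*v) B)"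
      by (simp add: onorm_triangle)
  qed
  show "norm (r *\<^sub>R a) = \<bar>r\<bar> * norm a"
  proof transfer
    fix r and A :: "real^'a^'a"
    have "(*v) (r *\<^sub>R A) = (\<lambda>x. r *\<^sub>R (A *v x))"
      by (simp add: fun_eq_iff scaleR_matrix_vector_assoc)
    then show "onorm ((*v) (r *\<^sub>R A)) = \<bar>r\<bar> * onorm ((*v) A)"
      by (simp add: onorm_scaleR)
  qed
qed (simp_all add: dist_sqmat_def sgn_sqmat_def uniformity_sqmat_def open_sqmat_def)
end

instance sqmat :: (finite) real_normed_algebra_1
proof
  fix a b :: "'a sqmat"
  show "norm (1::'a sqmat) = 1"
  proof transfer
    have "(*v) (mat 1) = (\<lambda>x::real^'a. x)"
      by (simp add: fun_eq_iff)
    then show "onorm ((*v) (mat 1 :: real^'a^'a)) = 1"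
      by (simp add: onorm_id)
  qed
  show "norm (a * b) \<le> norm a * norm b"
  proof transfer
    fix A B :: "real^'a^'a"
    have "(*v) (A ** B) = (*v) A \<circ> (*v) B"
      by (simp add: fun_eq_iff matrix_vector_mul_assoc)
    then show "onorm ((*v) (A ** B)) \<le> onorm ((*v) A) * onorm ((*v) B)"
      by (simp add: onorm_compose)
  qed
qed

lemma norm_Rep_sqmat_le: "norm (Rep_sqmat a) \<le> real CARD('n) * real CARD('n) * norm (a::'n::finite sqmat)"
proof -
  have row: "norm (Rep_sqmat a $ i) \<le> real CARD('n) * norm a" for i
  proof -
    have "norm (Rep_sqmat a $ i) \<le> (\<Sum>j\<in>UNIV. \<bar>Rep_sqmat a $ i $ j\<bar>)"
      by (rule norm_le_l1_cart)
    also have "\<dots> \<le> (\<Sum>j\<in>(UNIV::'n set). norm a)"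
      by (intro sum_mono) (simp add: norm_sqmat.rep_eq matrix_component_le_onorm)
    finally show ?thesis by simp
  qed
  have "norm (Rep_sqmat a) \<le> (\<Sum>i\<in>UNIV. norm (Rep_sqmat a $ i))"
    unfolding norm_vec_def by (rule L2_set_le_sum) simp
  also have "\<dots> \<le> (\<Sum>i\<in>(UNIV::'n set). real CARD('n) * norm a)"
    by (intro sum_mono row)
  finally show ?thesis by simp
qed

lemma bounded_linear_Rep_sqmat: "bounded_linear (Rep_sqmat :: 'n::finite sqmat \<Rightarrow> _)"
proof (rule bounded_linear_intro[where K = "real CARD('n) * real CARD('n)"])
  fix a b :: "'n sqmat" and r :: real
  show "Rep_sqmat (a + b) = Rep_sqmat a + Rep_sqmat b" by transfer simp
  show "Rep_sqmat (r *\<^sub>R a) = r *\<^sub>R Rep_sqmat a" by transfer simp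
  show "norm (Rep_sqmat a) \<le> norm a * (real CARD('n) * real CARD('n))"
    using norm_Rep_sqmat_le[of a] by (simp add: mult.commute)
qed

lemma bounded_linear_Abs_sqmat: "bounded_linear (Abs_sqmat :: real^'n^'n \<Rightarrow> 'n::finite sqmat)"
  unfolding linear_conv_bounded_linear[symmetric]
  by (rule linearI) (simp_all add: plus_sqmat.abs_eq scaleR_sqmat.abs_eq)

instance sqmat :: (finite) banach
proof
  fix X :: "nat \<Rightarrow> 'a sqmat"
  assume "Cauchy X"
  then have "convergent (\<lambda>n. Rep_sqmat (X n))"
    using bounded_linear.Cauchy[OF bounded_linear_Rep_sqmat] Cauchy_convergent_iff by blast
  then obtain L where "(\<lambda>n. Rep_sqmat (X n)) \<longlonglongrightarrow> L"
    by (auto simp: convergent_def)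
  then have "(\<lambda>n. Abs_sqmat (Rep_sqmat (X n))) \<longlonglongrightarrow> Abs_sqmat L"
    by (rule bounded_linear.tendsto[OF bounded_linear_Abs_sqmat])
  then show "convergent X"
    by (auto simp: Rep_sqmat_inverse convergent_def)
qed

lemma Rep_sqmat_power: "Rep_sqmat (a ^ m) = mat_power (Rep_sqmat a) m"
  by (induction m) (simp_all add: one_sqmat.rep_eq times_sqmat.rep_eq)

lemma mat_exp_sums: "(\<lambda>m. (1 / fact m) *\<^sub>R mat_power X m) sums mat_exp X"
  and mat_exp_conv_exp: "mat_exp X = Rep_sqmat (exp (Abs_sqmat X))"
proof -
  have "(\<lambda>m. Rep_sqmat (Abs_sqmat X ^ m /\<^sub>R fact m)) sums Rep_sqmat (exp (Abs_sqmat X))"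
    by (rule bounded_linear.sums[OF bounded_linear_Rep_sqmat exp_converges])
  then have sums: "(\<lambda>m. (1 / fact m) *\<^sub>R mat_power X m) sums Rep_sqmat (exp (Abs_sqmat X))"
    by (simp add: scaleR_sqmat.rep_eq Rep_sqmat_power Abs_sqmat_inverse divide_inverse)
  then show "mat_exp X = Rep_sqmat (exp (Abs_sqmat X))"
    unfolding mat_exp_def by (rule sums_unique[symmetric])
  with sums show "(\<lambda>m. (1 / fact m) *\<^sub>R mat_power X m) sums mat_exp X"
    by simp
qed

lemma mat_exp_scaleR: "mat_exp (t *\<^sub>R X) = Rep_sqmat (exp (t *\<^sub>R Abs_sqmat X))"
  by (simp add: mat_exp_conv_exp scaleR_sqmat.abs_eq)

lemma mat_exp_zero [simp]: "mat_exp 0 = mat 1"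
  by (simp add: mat_exp_conv_exp zero_sqmat.abs_eq[symmetric] one_sqmat.rep_eq)

lemma mat_exp_mult_mat_exp_uminus: "mat_exp X ** mat_exp (- X) = mat 1"
  by (simp add: mat_exp_conv_exp uminus_sqmat.abs_eq[symmetric] times_sqmat.rep_eq[symmetric]
      exp_minus_inverse one_sqmat.rep_eq)

lemma has_vector_derivative_mat_exp:
  "((\<lambda>t. mat_exp (t *\<^sub>R X)) has_vector_derivative mat_exp (t *\<^sub>R X) ** X) (at t within T)"
  using bounded_linear.has_vector_derivative[OF bounded_linear_Rep_sqmat
      exp_scaleR_has_vector_derivative_right[of "Abs_sqmat X" t T]]
  by (simp add: mat_exp_scaleR times_sqmat.rep_eq Abs_sqmat_inverse)

lemma tendsto_mat_power_mat_exp: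
  fixes W :: "nat \<Rightarrow> real^'n^'n"
  assumes "\<And>n. 0 < e n" "e \<longlonglongrightarrow> 0" "W \<longlonglongrightarrow> Z" "(\<lambda>n. real (m n) * e n) \<longlonglongrightarrow> t"
  shows "(\<lambda>n. mat_power (mat 1 + e n *\<^sub>R W n) (m n)) \<longlonglongrightarrow> mat_exp (t *\<^sub>R Z)"
proof -
  have "(\<lambda>n. Abs_sqmat (W n)) \<longlonglongrightarrow> Abs_sqmat Z"
    by (rule bounded_linear.tendsto[OF bounded_linear_Abs_sqmat assms(3)])
  from tendsto_power_one_plus_scaleR[OF assms(1,2) this assms(4)]
  have "(\<lambda>n. Rep_sqmat ((1 + e n *\<^sub>R Abs_sqmat (W n)) ^ m n))
      \<longlonglongrightarrow> Rep_sqmat (exp (t *\<^sub>R Abs_sqmat Z))"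
    by (rule bounded_linear.tendsto[OF bounded_linear_Rep_sqmat])
  then show ?thesis
    by (simp add: mat_exp_scaleR Rep_sqmat_power plus_sqmat.rep_eq scaleR_sqmat.rep_eq
        one_sqmat.rep_eq Abs_sqmat_inverse)
qed

lemma bounded_linear_matrix_vector_mult_left: "bounded_linear (\<lambda>M::real^'n^'m. M *v x)"
  unfolding linear_conv_bounded_linear[symmetric]
  by (rule linearI) (simp_all add: matrix_vector_mult_add_rdistrib scaleR_matrix_vector_assoc)

lemma mat_power_fixes:
  assumes "X *v x = 0"
  shows "mat_power X m *v x = (if m = 0 then x else 0)"
  using assms by (induction m) (auto simp: matrix_vector_mul_assoc[symmetric])

lemma mat_exp_fixes:
  assumes "X *v x = 0"
  shows "mat_exp X *v x = x"
proof -
  have "(\<lambda>m. ((1 / fact m) *\<^sub>R mat_power X m) *v x) sums (mat_exp X *v x)"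
    by (rule bounded_linear.sums[OF bounded_linear_matrix_vector_mult_left mat_exp_sums])
  moreover have "(\<lambda>m. ((1 / fact m) *\<^sub>R mat_power X m) *v x) = (\<lambda>m. if m = 0 then x else 0)"
    by (simp add: fun_eq_iff scaleR_matrix_vector_assoc[symmetric] mat_power_fixes[OF assms])
  ultimately show ?thesis
    using sums_single[of 0 "\<lambda>_. x"] sums_unique2 by fastforce
qed

section \<open>Inverse and orthogonal matrices\<close>

lemma matrix_inv_right:
  fixes A :: "real^'n^'n"
  assumes "invertible A"
  shows "A ** matrix_inv A = mat 1"
  using someI_ex[OF assms[unfolded invertible_def]] by (simp add: matrix_inv_def)

lemma matrix_inv_left:
  fixes A :: "real^'n^'n"
  assumes "invertible A"
  shows "matrix_inv A ** A = mat 1"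
  using matrix_inv_right[OF assms] matrix_left_right_inverse by blast

lemma matrix_inv_unique:
  fixes A B :: "real^'n^'n"
  assumes "A ** B = mat 1"
  shows "matrix_inv A = B"
proof -
  have "invertible A"
    using assms matrix_left_right_inverse invertible_def by blast
  then have "A ** matrix_inv A = A ** B"
    using assms matrix_inv_right by simp
  then show ?thesis
    by (metis assms matrix_left_right_inverse matrix_mul_assoc matrix_mul_lid)
qed

lemma matrix_inv_orthogonal:
  "orthogonal_matrix (U::real^'n^'n) \<Longrightarrow> matrix_inv U = transpose U"
  by (rule matrix_inv_unique) (simp add: orthogonal_matrix_def)

lemma norm_orthogonal_matrix_vector:
  assumes "orthogonal_matrix (U::real^'n^'n)"
  shows "norm (U *v x) = norm x"
  using assms orthogonal_transformation_matrix[of "(*v) U"]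
  by (simp add: orthogonal_transformation)

lemma norm_matrix_mul_orthogonal:
  assumes "orthogonal_matrix (U::real^'n^'n)"
  shows "norm (M ** U) = norm M"
proof -
  have "(M ** U) $ i = transpose U *v (M $ i)" for i
    by (simp add: vec_eq_iff matrix_matrix_mult_def matrix_vector_mult_def transpose_def mult.commute)
  then have "norm ((M ** U) $ i) = norm (M $ i)" for i
    using assms norm_orthogonal_matrix_vector[of "transpose U"] by simp
  then show ?thesis
    unfolding norm_vec_def[of "M ** U"] norm_vec_def[of M] by simp
qed

lemma norm_orthogonal_matrix:
  assumes "orthogonal_matrix (U::real^'n^'n)"
  shows "norm U = sqrt (real CARD('n))"
proof -
  have "norm (U $ i) = 1" for i
    using assms unfolding orthogonal_matrix_orthonormal_rows by (metis row_def vec_lambda_eta)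
  then show ?thesis
    by (simp add: norm_vec_def L2_set_def)
qed

lemma matrix_mul_diff_rdistrib: "(A - B) ** C = A ** C - B ** (C :: 'a::ring_1^_^_)"
  by (simp add: matrix_matrix_mult_def vec_eq_iff sum_subtractf algebra_simps)

lemma bounded_orthogonal_matrices: "bounded {U :: real^'n^'n. orthogonal_matrix U}"
  unfolding bounded_iff by (auto simp: norm_orthogonal_matrix)

lemma compact_closed_orthogonal:
  assumes "G \<subseteq> {U :: real^'n^'n. orthogonal_matrix U}" "closed G"
  shows "compact G"
  using assms bounded_subset[OF bounded_orthogonal_matrices]
  by (simp add: compact_eq_bounded_closed)

section \<open>One-parameter subgroups of closed matrix groups\<close>

lemma mat_power_in_subgroup:
  assumes "matrix_subgroup G" "M \<in> G"
  shows "mat_power M m \<in> G"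
  using assms by (induction m) (auto simp: matrix_subgroup_def)

lemma orthogonal_one_parameter_group_skew:
  assumes "\<And>t. orthogonal_matrix (mat_exp (t *\<^sub>R X))"
  shows "v \<bullet> (X *v v) = 0"
proof -
  define \<psi> where "\<psi> t = mat_exp (t *\<^sub>R X) *v v" for t
  have "(\<psi> has_vector_derivative X *v v) (at 0)"
    unfolding \<psi>_def[abs_def]
    using bounded_linear.has_vector_derivative[OF bounded_linear_matrix_vector_mult_left
        has_vector_derivative_mat_exp[of X 0 UNIV]]
    by simp
  from bounded_bilinear.has_vector_derivative[OF bounded_bilinear_inner this this]
  have "DERIV (\<lambda>t. \<psi> t \<bullet> \<psi> t) 0 :> 2 * (v \<bullet> (X *v v))"
    by (simp add: \<psi>_def has_real_derivative_iff_has_vector_derivative inner_commute)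
  moreover have "\<psi> t \<bullet> \<psi> t = v \<bullet> v" for t
    using norm_orthogonal_matrix_vector[OF assms] by (simp add: \<psi>_def norm_eq)
  ultimately have "DERIV (\<lambda>t. v \<bullet> v) 0 :> 2 * (v \<bullet> (X *v v))"
    by simp
  then show ?thesis
    using DERIV_unique[OF _ DERIV_const] by fastforce
qed

lemma lie_algebra_orthogonal_skew:
  assumes "G \<subseteq> {U. orthogonal_matrix U}" "X \<in> lie_algebra G"
  shows "v \<bullet> (X *v v) = 0"
  using assms by (intro orthogonal_one_parameter_group_skew) (auto simp: lie_algebra_def)

lemma inner_nonpos_if_identity_nearest_on_exp_ray:
  assumes nearest: "\<And>t. 0 < t \<Longrightarrow> norm (K - mat 1) \<le> norm (K - mat_exp (t *\<^sub>R Z))"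
  shows "(K - mat 1) \<bullet> Z \<le> 0"
proof (rule ccontr)
  assume pos: "\<not> ?thesis"
  define \<phi> where "\<phi> t = (K - mat_exp (t *\<^sub>R Z)) \<bullet> (K - mat_exp (t *\<^sub>R Z))" for t
  have "((\<lambda>t. K - mat_exp (t *\<^sub>R Z)) has_vector_derivative - Z) (at 0)"
    using has_vector_derivative_diff[OF has_vector_derivative_const has_vector_derivative_mat_exp[of Z 0 UNIV]]
    by simp
  from bounded_bilinear.has_vector_derivative[OF bounded_bilinear_inner this this]
  have "DERIV \<phi> 0 :> - (2 * ((K - mat 1) \<bullet> Z))"
    by (simp add: \<phi>_def[abs_def] has_real_derivative_iff_has_vector_derivative inner_commute)
  moreover have "- (2 * ((K - mat 1) \<bullet> Z)) < 0"
    using pos by simp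
  ultimately obtain d where "0 < d" and dec: "\<forall>h>0. h < d \<longrightarrow> \<phi> (0 + h) < \<phi> 0"
    by (blast dest: DERIV_neg_dec_right)
  have "\<phi> (d / 2) < \<phi> 0"
    using dec \<open>0 < d\<close> by simp
  moreover have "\<phi> 0 \<le> \<phi> (d / 2)"
    using nearest[of "d / 2"] \<open>0 < d\<close> by (simp add: \<phi>_def norm_le)
  ultimately show False
    by simp
qed

lemma secant_limit_in_lie_algebra:
  assumes G: "matrix_subgroup G" "closed G"
    and k: "\<And>n. k n \<in> G" and e_pos: "\<And>n. 0 < e n" and e: "e \<longlonglongrightarrow> 0"
    and Z: "(\<lambda>n. (1 / e n) *\<^sub>R (k n - mat 1)) \<longlonglongrightarrow> Z"
  shows "Z \<in> lie_algebra G"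
proof -
  have nonneg: "mat_exp (t *\<^sub>R Z) \<in> G" if "0 \<le> t" for t
  proof -
    define m where "m n = nat \<lfloor>t / e n\<rfloor>" for n
    have bounds: "t - e n \<le> real (m n) * e n \<and> real (m n) * e n \<le> t" for n
    proof -
      have "t / e n - 1 \<le> real (m n) \<and> real (m n) \<le> t / e n"
        using \<open>0 \<le> t\<close> e_pos[of n] by (simp add: m_def)
      then show ?thesis
        using e_pos[of n] by (simp add: field_simps)
    qed
    have lower: "(\<lambda>n. t - e n) \<longlonglongrightarrow> t"
      using tendsto_diff[OF tendsto_const e, of t] by simp
    have "(\<lambda>n. real (m n) * e n) \<longlonglongrightarrow> t"
      by (rule tendsto_sandwich[OF _ _ lower tendsto_const]) (simp_all add: always_eventually bounds)
    moreover have "mat 1 + e n *\<^sub>R ((1 / e n) *\<^sub>R (k n - mat 1)) = k n" for n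
      using e_pos[of n] by simp
    ultimately have "(\<lambda>n. mat_power (k n) (m n)) \<longlonglongrightarrow> mat_exp (t *\<^sub>R Z)"
      using tendsto_mat_power_mat_exp[OF e_pos e Z] by simp
    moreover have "mat_power (k n) (m n) \<in> G" for n
      by (rule mat_power_in_subgroup[OF G(1) k])
    ultimately show ?thesis
      by (rule closed_sequentially[OF G(2), rotated])
  qed
  have "mat_exp (t *\<^sub>R Z) \<in> G" for t
  proof (cases "0 \<le> t")
    case False
    have "matrix_inv (mat_exp ((- t) *\<^sub>R Z)) = mat_exp (t *\<^sub>R Z)"
      using mat_exp_mult_mat_exp_uminus[of "(- t) *\<^sub>R Z"] by (intro matrix_inv_unique) simp
    moreover have "matrix_inv (mat_exp ((- t) *\<^sub>R Z)) \<in> G"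
      using G(1) nonneg[of "- t"] False by (simp add: matrix_subgroup_def)
    ultimately show ?thesis
      by simp
  qed (rule nonneg)
  then show ?thesis
    by (simp add: lie_algebra_def)
qed

section \<open>Tangent directions of the orbit of a transitive group\<close>

lemma one_minus_cos_le_sin:
  fixes s :: real
  assumes "0 \<le> cos s" "0 \<le> sin s"
  shows "1 - cos s \<le> sin s"
proof -
  have "1 - cos s \<le> 1 - (cos s)\<^sup>2"
    using mult_left_le_one_le[OF assms(1) assms(1) cos_le_one[of s]] by (simp add: power2_eq_square)
  also have "\<dots> = (sin s)\<^sup>2"
    by (simp add: sin_squared_eq)
  also have "\<dots> \<le> sin s"
    using mult_left_le_one_le[OF assms(2) assms(2) sin_le_one[of s]] by (simp add: power2_eq_square)
  finally show ?thesis .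
qed

lemma sphere_sequence_approaching:
  fixes x u :: "'a::real_inner"
  assumes x: "norm x = 1" and u: "norm u = 1" and ux: "u \<bullet> x = 0"
  obtains y where "\<And>n. norm (y n) = 1" "y \<longlonglongrightarrow> x" "\<And>n. 0 < u \<bullet> (y n - x)"
    "\<And>n. norm (y n - x) \<le> 2 * (u \<bullet> (y n - x))"
proof -
  define s where "s n = 1 / real (Suc n)" for n
  define y where "y n = cos (s n) *\<^sub>R x + sin (s n) *\<^sub>R u" for n
  have s: "0 < s n" "s n \<le> 1" for n
    by (simp_all add: s_def)
  have sin_pos: "0 < sin (s n)" and cos_nonneg: "0 \<le> cos (s n)" for n
    using s[of n] pi_gt3 by (auto intro!: sin_gt_zero cos_ge_zero)
  have xx: "x \<bullet> x = 1" and uu: "u \<bullet> u = 1"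
    using x u by (simp_all add: norm_eq_1)
  have "y n \<bullet> y n = (cos (s n))\<^sup>2 + (sin (s n))\<^sup>2" for n
    by (simp add: y_def inner_add_left inner_add_right xx uu ux inner_commute power2_eq_square)
  then have y1: "norm (y n) = 1" for n
    by (simp add: norm_eq_1)
  have "s \<longlonglongrightarrow> 0"
    unfolding s_def using LIMSEQ_inverse_real_of_nat by (simp add: inverse_eq_divide)
  then have "y \<longlonglongrightarrow> cos 0 *\<^sub>R x + sin 0 *\<^sub>R u"
    unfolding y_def by (intro tendsto_intros)
  then have y_lim: "y \<longlonglongrightarrow> x"
    by simp
  have u_y: "u \<bullet> (y n - x) = sin (s n)" for n
    by (simp add: y_def inner_diff_right inner_add_right uu ux)
  then have u_y_pos: "0 < u \<bullet> (y n - x)" for n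
    by (simp add: sin_pos)
  have "norm (y n - x) \<le> 2 * (u \<bullet> (y n - x))" for n
  proof -
    have "norm (y n - x) = norm ((cos (s n) - 1) *\<^sub>R x + sin (s n) *\<^sub>R u)"
      by (simp add: y_def algebra_simps)
    also have "\<dots> \<le> (1 - cos (s n)) + sin (s n)"
      using norm_triangle_ineq[of "(cos (s n) - 1) *\<^sub>R x" "sin (s n) *\<^sub>R u"] x u sin_pos[of n]
      by simp
    finally show ?thesis
      using one_minus_cos_le_sin[OF cos_nonneg[of n] less_imp_le[OF sin_pos[of n]]] u_y[of n] by simp
  qed
  with y1 y_lim u_y_pos show ?thesis
    by (rule that)
qed

definition stabilizer :: "(real^'n^'n) set \<Rightarrow> real^'n \<Rightarrow> (real^'n^'n) set"
  where "stabilizer G x = {h \<in> G. h *v x = x}"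

lemma exists_coset_representative_nearest_identity:
  fixes G :: "(real^'n^'n) set"
  assumes sub: "matrix_subgroup G" and orth: "G \<subseteq> {U. orthogonal_matrix U}" and cl: "closed G"
    and "g \<in> G"
  obtains k where "k \<in> G" "k *v x = g *v x"
    "\<And>h. h \<in> stabilizer G x \<Longrightarrow> norm (k - mat 1) \<le> norm (k - h)"
proof -
  define F where "F = G \<inter> {k. k *v x = g *v x}"
  have "closed {k :: real^'n^'n. k *v x = g *v x}"
    by (intro closed_Collect_eq continuous_on_const linear_continuous_on
        bounded_linear_matrix_vector_mult_left)
  then have "compact F"
    unfolding F_def by (intro compact_Int_closed compact_closed_orthogonal orth cl)
  moreover have "F \<noteq> {}"
    using \<open>g \<in> G\<close> by (auto simp: F_def)
  moreover have "continuous_on F (\<lambda>k. norm (k - mat 1))"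
    by (intro continuous_intros)
  ultimately obtain k where k: "k \<in> F" and min: "\<forall>k'\<in>F. norm (k - mat 1) \<le> norm (k' - mat 1)"
    by (metis continuous_attains_inf)
  show ?thesis
  proof
    show "k \<in> G" "k *v x = g *v x"
      using k by (simp_all add: F_def)
    fix h
    assume "h \<in> stabilizer G x"
    then have h: "h \<in> G" "h *v x = x"
      by (simp_all add: stabilizer_def)
    then have h_orth: "orthogonal_matrix h"
      using orth by auto
    have "transpose h \<in> G"
      using sub h(1) matrix_inv_orthogonal[OF h_orth] unfolding matrix_subgroup_def by metis
    moreover have "transpose h *v x = x"
      using h_orth h(2) by (metis matrix_vector_mul_assoc matrix_vector_mul_lid orthogonal_matrix_def)
    ultimately have "k ** transpose h \<in> F"
      using sub k by (simp add: F_def matrix_subgroup_def matrix_vector_mul_assoc[symmetric])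
    then have "norm (k - mat 1) \<le> norm (k ** transpose h - mat 1)"
      using min by blast
    also have "k ** transpose h - mat 1 = (k - h) ** transpose h"
      using h_orth matrix_mul_diff_rdistrib[of k h "transpose h"] by (simp add: orthogonal_matrix_def)
    finally show "norm (k - mat 1) \<le> norm (k - h)"
      using norm_matrix_mul_orthogonal[of "transpose h" "k - h"] h_orth by simp
  qed
qed

lemma normalized_secants_converge_in_lie_algebra:
  fixes G :: "(real^'n^'n) set"
  assumes sub: "matrix_subgroup G" and orth: "G \<subseteq> {U. orthogonal_matrix U}" and cl: "closed G"
    and k: "\<And>n. k n \<in> G" "\<And>n. k n \<noteq> mat 1" and kx: "(\<lambda>n. k n *v x) \<longlonglongrightarrow> x"
    and nearest: "\<And>n h. h \<in> stabilizer G x \<Longrightarrow> norm (k n - mat 1) \<le> norm (k n - h)"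
  obtains \<sigma> Z where "strict_mono \<sigma>" "Z \<in> lie_algebra G" "norm Z = 1"
    "(\<lambda>n. (1 / norm (k (\<sigma> n) - mat 1)) *\<^sub>R (k (\<sigma> n) - mat 1)) \<longlonglongrightarrow> Z"
proof -
  define e where "e n = norm (k n - mat 1)" for n
  define W where "W n = (1 / e n) *\<^sub>R (k n - mat 1)" for n
  have e_pos: "0 < e n" for n
    using k(2) by (simp add: e_def)
  have "seq_compact (G \<times> sphere (0 :: real^'n^'n) 1)"
    by (intro compact_imp_seq_compact compact_Times compact_closed_orthogonal orth cl compact_sphere)
  moreover have "\<forall>n. (k n, W n) \<in> G \<times> sphere 0 1"
    using k(1) e_pos by (simp add: W_def e_def)
  ultimately obtain l \<sigma> where l: "l \<in> G \<times> sphere 0 1" and \<sigma>: "strict_mono \<sigma>"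
    and lim: "((\<lambda>n. (k n, W n)) \<circ> \<sigma>) \<longlonglongrightarrow> l"
    by (rule seq_compactE)
  obtain g Z where gZ: "l = (g, Z)"
    by (cases l)
  with l have g: "g \<in> G" and Z1: "norm Z = 1"
    by auto
  note lim = lim[unfolded gZ]
  have k_lim: "(\<lambda>n. k (\<sigma> n)) \<longlonglongrightarrow> g" and W_lim: "(\<lambda>n. W (\<sigma> n)) \<longlonglongrightarrow> Z"
    using tendsto_fst[OF lim] tendsto_snd[OF lim] by (simp_all add: o_def)
  have "(\<lambda>n. k (\<sigma> n) *v x) \<longlonglongrightarrow> g *v x"
    by (rule bounded_linear.tendsto[OF bounded_linear_matrix_vector_mult_left k_lim])
  moreover have "(\<lambda>n. k (\<sigma> n) *v x) \<longlonglongrightarrow> x"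
    using LIMSEQ_subseq_LIMSEQ[OF kx \<sigma>] by (simp add: o_def)
  ultimately have "g \<in> stabilizer G x"
    using g LIMSEQ_unique by (auto simp: stabilizer_def)
  then have bound: "\<forall>n. norm (e (\<sigma> n)) \<le> norm (k (\<sigma> n) - g)"
    using nearest by (simp add: e_def)
  have "(\<lambda>n. norm (k (\<sigma> n) - g)) \<longlonglongrightarrow> 0"
    using tendsto_norm[OF LIM_zero[OF k_lim]] by simp
  then have "(\<lambda>n. e (\<sigma> n)) \<longlonglongrightarrow> 0"
    by (rule Lim_null_comparison[OF always_eventually[OF bound]])
  then have "Z \<in> lie_algebra G"
    using secant_limit_in_lie_algebra[OF sub cl k(1) e_pos _ W_lim[unfolded W_def]] by simp
  with \<sigma> Z1 W_lim show ?thesis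
    using that by (simp add: W_def e_def)
qed

lemma exists_nearest_elements_approaching:
  fixes G :: "(real^'n^'n) set"
  assumes sub: "matrix_subgroup G" and orth: "G \<subseteq> {U. orthogonal_matrix U}" and cl: "closed G"
    and tr: "transitive_on_sphere G"
    and x: "norm x = 1" and u: "norm u = 1" and ux: "u \<bullet> x = 0"
  obtains k where "\<And>n. k n \<in> G" "(\<lambda>n. k n *v x) \<longlonglongrightarrow> x"
    "\<And>n. 0 < u \<bullet> (k n *v x - x)" "\<And>n. norm (k n *v x - x) \<le> 2 * (u \<bullet> (k n *v x - x))"
    "\<And>n h. h \<in> stabilizer G x \<Longrightarrow> norm (k n - mat 1) \<le> norm (k n - h)"
proof -
  obtain y where y1: "\<And>n. norm (y n) = 1" and y: "y \<longlonglongrightarrow> x" "\<And>n. 0 < u \<bullet> (y n - x)"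
    "\<And>n. norm (y n - x) \<le> 2 * (u \<bullet> (y n - x))"
    using sphere_sequence_approaching[OF x u ux] by blast
  have "\<exists>k. k \<in> G \<and> k *v x = y n \<and> (\<forall>h\<in>stabilizer G x. norm (k - mat 1) \<le> norm (k - h))" for n
  proof -
    obtain g where "g \<in> G" "g *v x = y n"
      using tr x y1 unfolding transitive_on_sphere_def by blast
    then show ?thesis
      using exists_coset_representative_nearest_identity[OF sub orth cl \<open>g \<in> G\<close>, of x] by metis
  qed
  then obtain k where kG: "\<And>n. k n \<in> G" and kx: "\<And>n. k n *v x = y n"
    and nearest: "\<And>n h. h \<in> stabilizer G x \<Longrightarrow> norm (k n - mat 1) \<le> norm (k n - h)"
    by metis
  show ?thesis
    by (rule that[of k]) (simp_all add: kG kx y nearest)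
qed

lemma lie_algebra_tangent_not_orthogonal:
  fixes G :: "(real^'n^'n) set"
  assumes sub: "matrix_subgroup G" and orth: "G \<subseteq> {U. orthogonal_matrix U}" and cl: "closed G"
    and tr: "transitive_on_sphere G"
    and x: "norm x = 1" and u: "norm u = 1" and ux: "u \<bullet> x = 0"
  shows "\<exists>X\<in>lie_algebra G. u \<bullet> (X *v x) \<noteq> 0"
proof (rule ccontr)
  assume "\<not> ?thesis"
  then have perp: "u \<bullet> (X *v x) = 0" if "X \<in> lie_algebra G" for X
    using that by blast
  obtain k where kG: "\<And>n. k n \<in> G" and kx_lim: "(\<lambda>n. k n *v x) \<longlonglongrightarrow> x"
    and kx_pos: "\<And>n. 0 < u \<bullet> (k n *v x - x)"
    and kx_bound: "\<And>n. norm (k n *v x - x) \<le> 2 * (u \<bullet> (k n *v x - x))"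
    and nearest: "\<And>n h. h \<in> stabilizer G x \<Longrightarrow> norm (k n - mat 1) \<le> norm (k n - h)"
    using exists_nearest_elements_approaching[OF sub orth cl tr x u ux] by blast
  have k1: "k n \<noteq> mat 1" for n
    using kx_pos[of n] by auto
  define W where "W n = (1 / norm (k n - mat 1)) *\<^sub>R (k n - mat 1)" for n
  obtain \<sigma> Z where ZL: "Z \<in> lie_algebra G" and Z1: "norm Z = 1"
    and W_lim: "(\<lambda>n. W (\<sigma> n)) \<longlonglongrightarrow> Z"
    unfolding W_def
    by (rule normalized_secants_converge_in_lie_algebra[OF sub orth cl kG k1 kx_lim nearest])
  have "W n *v x = (1 / norm (k n - mat 1)) *\<^sub>R (k n *v x - x)" for n
    by (simp add: W_def scaleR_matrix_vector_assoc[symmetric] matrix_vector_mult_diff_rdistrib)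
  then have Wx_bound: "norm (W n *v x) \<le> 2 * (u \<bullet> (W n *v x))" for n
    using kx_bound[of n] by (simp add: divide_right_mono)
  have Wx_lim: "(\<lambda>n. W (\<sigma> n) *v x) \<longlonglongrightarrow> Z *v x"
    by (rule bounded_linear.tendsto[OF bounded_linear_matrix_vector_mult_left W_lim])
  have "norm (Z *v x) \<le> 2 * (u \<bullet> (Z *v x))"
    by (rule LIMSEQ_le[OF tendsto_norm[OF Wx_lim]
          tendsto_mult[OF tendsto_const tendsto_inner[OF tendsto_const Wx_lim]]])
      (simp add: Wx_bound)
  then have "Z *v x = 0"
    using perp[OF ZL] by simp
  then have "mat_exp (t *\<^sub>R Z) \<in> stabilizer G x" for t
    using ZL mat_exp_fixes[of "t *\<^sub>R Z" x]
    by (simp add: lie_algebra_def stabilizer_def scaleR_matrix_vector_assoc[symmetric])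
  then have "(k n - mat 1) \<bullet> Z \<le> 0" for n
    by (intro inner_nonpos_if_identity_nearest_on_exp_ray nearest)
  then have "W n \<bullet> Z \<le> 0" for n
    by (simp add: W_def divide_nonpos_nonneg)
  then have "Z \<bullet> Z \<le> 0"
    by (intro LIMSEQ_le_const2[OF tendsto_inner[OF W_lim tendsto_const]]) simp
  with Z1 show False
    by (simp add: power2_norm_eq_inner[symmetric])
qed

lemma span_lie_algebra_tangents:
  fixes G :: "(real^'n^'n) set"
  assumes sub: "matrix_subgroup G" and orth: "G \<subseteq> {U. orthogonal_matrix U}" and cl: "closed G"
    and tr: "transitive_on_sphere G" and x: "norm x = 1"
  shows "span {X *v x | X. X \<in> lie_algebra G} = {v. v \<bullet> x = 0}"
proof
  let ?S = "{X *v x | X. X \<in> lie_algebra G}"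
  have "?S \<subseteq> {v. v \<bullet> x = 0}"
    using lie_algebra_orthogonal_skew[OF orth] by (auto simp: inner_commute)
  moreover have "subspace {v :: real^'n. v \<bullet> x = 0}"
    by (auto simp: subspace_def inner_add_left)
  ultimately show span_perp: "span ?S \<subseteq> {v. v \<bullet> x = 0}"
    by (rule span_minimal)
  show "{v. v \<bullet> x = 0} \<subseteq> span ?S"
  proof
    fix v :: "real^'n"
    assume "v \<in> {v. v \<bullet> x = 0}"
    obtain p q where p: "p \<in> span ?S" and q: "\<And>w. w \<in> span ?S \<Longrightarrow> orthogonal q w"
      and v: "v = p + q"
      using orthogonal_subspace_decomp_exists[of ?S v] by blast
    show "v \<in> span ?S"
    proof (cases "q = 0")
      case False
      have "q \<bullet> x = 0"
        using \<open>v \<in> _\<close> span_perp p by (auto simp: v inner_add_left)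
      then obtain X where "X \<in> lie_algebra G" and "(q /\<^sub>R norm q) \<bullet> (X *v x) \<noteq> 0"
        using lie_algebra_tangent_not_orthogonal[OF sub orth cl tr x, of "q /\<^sub>R norm q"] False by auto
      moreover have "orthogonal q (X *v x)"
        using q \<open>X \<in> lie_algebra G\<close> by (auto intro: span_base)
      ultimately show ?thesis
        by (simp add: orthogonal_def)
    qed (use p v in simp)
  qed
qed

lemma normalizer_preserves_orthogonality:
  fixes G :: "(real^'n^'n) set"
  assumes sub: "matrix_subgroup G" and orth: "G \<subseteq> {U. orthogonal_matrix U}" and cl: "closed G"
    and tr: "transitive_on_sphere G" and A: "invertible A"
    and normalizes: "(\<lambda>X. A ** X ** matrix_inv A) ` lie_algebra G = lie_algebra G"
    and xv: "x \<bullet> v = 0"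
  shows "(A *v x) \<bullet> (A *v v) = 0"
proof (cases "x = 0")
  case False
  define x1 where "x1 = x /\<^sub>R norm x"
  have tangent: "(A *v z) \<bullet> (A *v (X *v z)) = 0" if "X \<in> lie_algebra G" for X z
  proof -
    have "A ** X ** matrix_inv A \<in> lie_algebra G"
      using normalizes that by blast
    moreover have "(A ** X ** matrix_inv A) *v (A *v z) = A *v (X *v z)"
      by (simp add: matrix_vector_mul_assoc matrix_mul_assoc[symmetric] matrix_inv_left[OF A])
    ultimately show ?thesis
      using lie_algebra_orthogonal_skew[OF orth, of _ "A *v z"] by metis
  qed
  have "{X *v x1 | X. X \<in> lie_algebra G} \<subseteq> {w. (A *v x1) \<bullet> (A *v w) = 0}"
    using tangent by auto
  moreover have "subspace {w. (A *v x1) \<bullet> (A *v w) = 0}"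
    by (auto simp: subspace_def matrix_vector_right_distrib inner_add_right matrix_vector_mult_scaleR)
  moreover have "v \<in> span {X *v x1 | X. X \<in> lie_algebra G}"
    using xv False span_lie_algebra_tangents[OF sub orth cl tr, of x1]
    by (simp add: x1_def inner_commute)
  ultimately have "(A *v x1) \<bullet> (A *v v) = 0"
    using span_minimal by blast
  then show ?thesis
    using False by (simp add: x1_def matrix_vector_mult_scaleR)
qed simp

lemma orthogonality_preserving_norm_eq:
  fixes A :: "real^'n^'n"
  assumes orthogonality: "\<And>x v. x \<bullet> v = 0 \<Longrightarrow> (A *v x) \<bullet> (A *v v) = 0" and "norm x = norm v"
  shows "norm (A *v x) = norm (A *v v)"
proof -
  have "(x + v) \<bullet> (x - v) = x \<bullet> x - x \<bullet> v + (v \<bullet> x - v \<bullet> v)"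
    by (simp only: inner_add_left inner_diff_right)
  also have "\<dots> = 0"
    using assms(2) by (simp add: inner_commute norm_eq)
  finally have "(x + v) \<bullet> (x - v) = 0" .
  from orthogonality[OF this] have "(A *v x + A *v v) \<bullet> (A *v x - A *v v) = 0"
    by (simp add: matrix_vector_right_distrib matrix_vector_mult_diff_distrib)
  then have "(A *v x) \<bullet> (A *v x) - (A *v x) \<bullet> (A *v v)
      + ((A *v v) \<bullet> (A *v x) - (A *v v) \<bullet> (A *v v)) = 0"
    by (simp only: inner_add_left inner_diff_right)
  then show ?thesis
    by (simp add: inner_commute norm_eq)
qed

lemma conformal_if_preserves_orthogonality:
  fixes A :: "real^'n^'n"
  assumes A: "invertible A" and orthogonality: "\<And>x v. x \<bullet> v = 0 \<Longrightarrow> (A *v x) \<bullet> (A *v v) = 0"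
  shows "A \<in> CO"
proof -
  define c where "c i = A *v axis i 1" for i
  obtain i0 :: 'n where True
    by simp
  define r where "r = norm (c i0)"
  have "c i0 \<noteq> A *v 0"
    using injD[OF inj_matrix_vector_mult[OF A]] by (metis c_def axis_eq_0_iff zero_neq_one)
  then have "0 < r"
    by (simp add: r_def)
  have c_orth: "c i \<bullet> c j = 0" if "i \<noteq> j" for i j
    using orthogonality[of "axis i 1" "axis j 1"] that by (simp add: c_def inner_axis_axis)
  have c_sq: "c i \<bullet> c i = r * r" for i
    using orthogonality_preserving_norm_eq[OF orthogonality, of "axis i 1" "axis i0 1"]
    by (simp add: c_def r_def dot_square_norm power2_eq_square)
  define B where "B = (1 / r) *\<^sub>R A"
  have column_B: "column i B = (1 / r) *\<^sub>R c i" for i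
    by (simp add: B_def c_def matrix_vector_mult_basis[symmetric] scaleR_matrix_vector_assoc)
  have "transpose B ** B = mat 1"
    unfolding matrix_mult_transpose_dot_column using \<open>0 < r\<close>
    by (simp add: vec_eq_iff mat_def column_B c_orth c_sq)
  then have "orthogonal_matrix B"
    by (simp add: orthogonal_matrix)
  moreover have "A = r *\<^sub>R B"
    using \<open>0 < r\<close> by (simp add: B_def)
  ultimately show ?thesis
    using \<open>0 < r\<close> unfolding CO_def by (intro CollectI exI[of _ r] exI[of _ B]) simp
qed

theorem lemma5p2:
  fixes G :: "(real^'n^'n) set" and A :: "real^'n^'n"
  assumes "matrix_subgroup G" and "G \<subseteq> SO"
    and "closed G" and "connected G"
    and "transitive_on_sphere G"
    and "invertible A"
    and "(\<lambda>X. A ** X ** matrix_inv A) ` lie_algebra G = lie_algebra G"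
  shows "A \<in> CO"
proof -
  have orth: "G \<subseteq> {U. orthogonal_matrix U}"
    using assms(2) by (auto simp: SO_def)
  have "(A *v x) \<bullet> (A *v v) = 0" if "x \<bullet> v = 0" for x v
    by (rule normalizer_preserves_orthogonality[OF assms(1) orth assms(3,5,6,7) that])
  then show ?thesis
    by (rule conformal_if_preserves_orthogonality[OF assms(6)])
qed

end
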